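(* If there exist complex unit vectors $|\psi\rangle$ and $|v_j\rangle$ ($j\in V$) in $\mathbb{C}^d$ with $\langle v_i|v_j\rangle=0$ whenever $(i,j)\in E$ that attain $\sum_{j\in V} w_j |\langle \psi|v_j\rangle|^2=\vartheta_c(G)$ (a Lovász-optimum orthogonal representation realized in the $d$-dimensional complex Hilbert space), then there exist real unit vectors $|\phi\rangle$ and $|\omega_j\rangle$ ($j\in V$) in $\mathbb{R}^{2d-1}$ with $\langle \omega_i|\omega_j\rangle=0$ whenever $(i,j)\in E$ and $\sum_{j\in V} w_j (\langle \phi|\omega_j\rangle)^2=\vartheta_c(G)$. Consequently $\vartheta_c(G)=\vartheta(G)$, and the Lovász-optimum orthogonal representation of any exclusivity graph can be realized in a real Hilbert space of suitable dimension.
   Context: Let $G=(V,E,W)$ be a (weighted) exclusivity graph with vertex set $V$, edge set $E$ and nonnegative vertex weights $w_j$. The Lovász number is $\vartheta(G)=\max \sum_{j\in V} w_j (\langle \psi|v_j\rangle)^2$, where $|\psi\rangle$ and $|v_j\rangle$, $j\in V$, run over all real unit vectors (of any dimension) such that $\langle v_i|v_j\rangle=0$ whenever vertices $i,j$ are connected. Its complex generalization is $\vartheta_c(G)=\max \sum_{j\in V} w_j |\langle \psi|v_j\rangle|^2$, where $|\psi\rangle$ and $|v_j\rangle$ run over all complex unit vectors such that $\langle v_i|v_j\rangle=0$ whenever vertices $i,j$ are connected. A Lovász-optimum orthogonal representation is a choice of such vectors attaining the maximum. *)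

theory Defs
  imports Complex_Main
begin

text \<open>Vectors of C^n (resp. R^n) are represented by functions nat => complex (resp. real);
  only the coordinates 0..n-1 are used.  Inner product <u|v> = sum_k cnj(u_k) v_k.\<close>

definition cinner_n :: "nat \<Rightarrow> (nat \<Rightarrow> complex) \<Rightarrow> (nat \<Rightarrow> complex) \<Rightarrow> complex" where
  "cinner_n n u v = (\<Sum>k<n. cnj (u k) * v k)"

definition rinner_n :: "nat \<Rightarrow> (nat \<Rightarrow> real) \<Rightarrow> (nat \<Rightarrow> real) \<Rightarrow> real" where
  "rinner_n n u v = (\<Sum>k<n. u k * v k)"

definition exclusivity_graph :: "'a set \<Rightarrow> ('a \<Rightarrow> 'a \<Rightarrow> bool) \<Rightarrow> ('a \<Rightarrow> real) \<Rightarrow> bool" where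
  "exclusivity_graph V E w \<longleftrightarrow> finite V \<and> (\<forall>i j. E i j \<longrightarrow> E j i) \<and> (\<forall>i. \<not> E i i)
     \<and> (\<forall>j\<in>V. 0 \<le> w j)"

definition c_orth_rep :: "nat \<Rightarrow> 'a set \<Rightarrow> ('a \<Rightarrow> 'a \<Rightarrow> bool) \<Rightarrow> (nat \<Rightarrow> complex)
    \<Rightarrow> ('a \<Rightarrow> nat \<Rightarrow> complex) \<Rightarrow> bool" where
  "c_orth_rep n V E psi v \<longleftrightarrow> cinner_n n psi psi = 1 \<and> (\<forall>j\<in>V. cinner_n n (v j) (v j) = 1)
     \<and> (\<forall>i\<in>V. \<forall>j\<in>V. E i j \<longrightarrow> cinner_n n (v i) (v j) = 0)"

definition r_orth_rep :: "nat \<Rightarrow> 'a set \<Rightarrow> ('a \<Rightarrow> 'a \<Rightarrow> bool) \<Rightarrow> (nat \<Rightarrow> real)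
    \<Rightarrow> ('a \<Rightarrow> nat \<Rightarrow> real) \<Rightarrow> bool" where
  "r_orth_rep n V E psi v \<longleftrightarrow> rinner_n n psi psi = 1 \<and> (\<forall>j\<in>V. rinner_n n (v j) (v j) = 1)
     \<and> (\<forall>i\<in>V. \<forall>j\<in>V. E i j \<longrightarrow> rinner_n n (v i) (v j) = 0)"

definition c_value :: "nat \<Rightarrow> 'a set \<Rightarrow> ('a \<Rightarrow> real) \<Rightarrow> (nat \<Rightarrow> complex)
    \<Rightarrow> ('a \<Rightarrow> nat \<Rightarrow> complex) \<Rightarrow> real" where
  "c_value n V w psi v = (\<Sum>j\<in>V. w j * (cmod (cinner_n n psi (v j)))\<^sup>2)"

definition r_value :: "nat \<Rightarrow> 'a set \<Rightarrow> ('a \<Rightarrow> real) \<Rightarrow> (nat \<Rightarrow> real)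
    \<Rightarrow> ('a \<Rightarrow> nat \<Rightarrow> real) \<Rightarrow> real" where
  "r_value n V w psi v = (\<Sum>j\<in>V. w j * (rinner_n n psi (v j))\<^sup>2)"

definition lovasz_theta :: "'a set \<Rightarrow> ('a \<Rightarrow> 'a \<Rightarrow> bool) \<Rightarrow> ('a \<Rightarrow> real) \<Rightarrow> real" where
  "lovasz_theta V E w = Sup {r_value n V w psi v | n psi v. r_orth_rep n V E psi v}"

definition lovasz_theta_c :: "'a set \<Rightarrow> ('a \<Rightarrow> 'a \<Rightarrow> bool) \<Rightarrow> ('a \<Rightarrow> real) \<Rightarrow> real" where
  "lovasz_theta_c V E w = Sup {c_value n V w psi v | n psi v. c_orth_rep n V E psi v}"

end

theory Submission imports Defs begin

text \<open>Multiply each \<open>v\<^sub>j\<close> by a phase so that every overlap \<open>\<langle>\<psi>|v\<^sub>j\<rangle>\<close> is real and nonnegative.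
  Splitting \<open>\<complex>\<^sup>d\<close> into real and imaginary parts gives an isometric embedding
  \<open>Re \<langle>\<cdot>|\<cdot>\<rangle>\<close> into \<open>\<real>\<^sup>2\<^sup>d\<close>; since all overlaps and all required orthogonalities are now real,
  the realified vectors form a real orthogonal representation of the same value.  Moreover
  all of them are orthogonal to the realification of \<open>i\<psi>\<close>, because \<open>Re \<langle>i\<psi>|x\<rangle> = Im \<langle>\<psi>|x\<rangle>\<close>
  vanishes on \<open>\<psi>\<close> and on the aligned \<open>v\<^sub>j\<close>; a Householder reflection moving \<open>i\<psi>\<close> to the last
  basis vector then lands everything in \<open>\<real>\<^sup>2\<^sup>d\<^sup>-\<^sup>1\<close>.  Real representations are complex ones, so
  the attained complex optimum is also the real optimum.\<close>

lemma sum_lessThan_add: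
  fixes f :: "nat \<Rightarrow> 'b::comm_monoid_add"
  shows "(\<Sum>k<a + b. f k) = (\<Sum>k<a. f k) + (\<Sum>k<b. f (a + k))"
  by (induction b) (auto simp: add.assoc)

lemma rinner_n_commute: "rinner_n n x y = rinner_n n y x"
  by (simp add: rinner_n_def mult.commute)

lemma rinner_n_diff_left: "rinner_n n (\<lambda>k. x k - a k) y = rinner_n n x y - rinner_n n a y"
  by (simp add: rinner_n_def algebra_simps sum_subtractf)

lemma rinner_n_diff_scale_left:
  "rinner_n n (\<lambda>k. x k - c * a k) y = rinner_n n x y - c * rinner_n n a y"
  by (simp add: rinner_n_def algebra_simps sum_subtractf sum_distrib_left)

lemma rinner_n_diff_scale_right:
  "rinner_n n y (\<lambda>k. x k - c * a k) = rinner_n n y x - c * rinner_n n y a"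
  by (simp add: rinner_n_def algebra_simps sum_subtractf sum_distrib_left)

lemma rinner_n_Suc: "rinner_n (Suc m) x y = rinner_n m x y + x m * y m"
  by (simp add: rinner_n_def)

lemma rinner_n_unit_vector: "rinner_n (Suc m) (\<lambda>k. if k = m then 1 else 0) y = y m"
  by (simp add: rinner_n_def if_distrib cong: if_cong)

lemma rinner_n_self_eq_0_imp: "rinner_n n a a = 0 \<Longrightarrow> rinner_n n a x = 0"
  unfolding rinner_n_def by (subst (asm) sum_nonneg_eq_0_iff) auto

text \<open>The Householder reflection exchanging \<open>U\<close> and the last basis vector \<open>e\<^sub>m\<close>
  (the identity if \<open>U = e\<^sub>m\<close>).\<close>

lemma householder_to_last_coordinate:
  assumes "rinner_n (Suc m) U U = 1"
  shows "\<exists>H. (\<forall>x y. rinner_n (Suc m) (H x) (H y) = rinner_n (Suc m) x y)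
           \<and> (\<forall>x. rinner_n (Suc m) U x = 0 \<longrightarrow> H x m = 0)"
proof -
  define a :: "nat \<Rightarrow> real" where "a = (\<lambda>k. U k - (if k = m then 1 else 0))"
  define H where "H = (\<lambda>x k. x k - (2 * rinner_n (Suc m) a x / rinner_n (Suc m) a a) * a k)"
  have a_inner: "rinner_n (Suc m) a y = rinner_n (Suc m) U y - y m" for y
    unfolding a_def rinner_n_diff_left rinner_n_unit_vector ..
  have a_m: "a m = U m - 1"
    by (simp add: a_def)
  have a_a: "rinner_n (Suc m) a a = 2 - 2 * U m"
  proof -
    have "rinner_n (Suc m) U a = 1 - U m"
      using a_inner[of U] assms by (simp add: rinner_n_commute[of _ U a])
    then show ?thesis
      using a_inner[of a] a_m by simp
  qed
  have "rinner_n (Suc m) (H x) (H y) = rinner_n (Suc m) x y" for x y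
  proof (cases "rinner_n (Suc m) a a = 0")
    case False
    have reflection_identity:
      "(xy - (2 * ay / aa) * xa) - (2 * xa / aa) * (ay - (2 * ay / aa) * aa) = xy"
      if "aa \<noteq> 0" for xy ay aa xa :: real
      using that by (simp add: field_simps)
    show ?thesis
      unfolding H_def rinner_n_diff_scale_left rinner_n_diff_scale_right
      using reflection_identity[OF False, of "rinner_n (Suc m) x y" "rinner_n (Suc m) a y"
          "rinner_n (Suc m) a x"]
      by (simp add: rinner_n_commute[of _ x a])
  qed (simp add: H_def)
  moreover have "H x m = 0" if "rinner_n (Suc m) U x = 0" for x
  proof (cases "rinner_n (Suc m) a a = 0")
    case True
    then show ?thesis
      using a_inner[of x] that rinner_n_self_eq_0_imp[OF True] by (simp add: H_def)
  next
    case False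
    then have "U m \<noteq> 1"
      using a_a by simp
    have "H x m = x m - (2 * (- x m) / (2 - 2 * U m)) * (U m - 1)"
      using a_inner[of x] that unfolding H_def a_a a_m by simp
    also have "\<dots> = 0"
      using \<open>U m \<noteq> 1\<close> by (simp add: field_simps)
    finally show ?thesis .
  qed
  ultimately show ?thesis
    by blast
qed

lemma isometry_of_orthogonal_complement:
  assumes "rinner_n (Suc m) U U = 1"
  obtains G where "\<And>x y. rinner_n (Suc m) U x = 0 \<Longrightarrow> rinner_n (Suc m) U y = 0 \<Longrightarrow>
      rinner_n m (G x) (G y) = rinner_n (Suc m) x y"
proof -
  obtain H where iso: "\<And>x y. rinner_n (Suc m) (H x) (H y) = rinner_n (Suc m) x y"
    and last: "\<And>x. rinner_n (Suc m) U x = 0 \<Longrightarrow> H x m = 0"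
    using householder_to_last_coordinate[OF assms] by blast
  show ?thesis
  proof (rule that)
    fix x y
    assume "rinner_n (Suc m) U x = 0" "rinner_n (Suc m) U y = 0"
    then show "rinner_n m (H x) (H y) = rinner_n (Suc m) x y"
      using iso[of x y] last[of x] last[of y] by (simp add: rinner_n_Suc)
  qed
qed

lemma cinner_n_scale_left: "cinner_n n (\<lambda>k. a * u k) v = cnj a * cinner_n n u v"
  by (simp add: cinner_n_def sum_distrib_left algebra_simps)

lemma cinner_n_scale_right: "cinner_n n u (\<lambda>k. b * v k) = b * cinner_n n u v"
  by (simp add: cinner_n_def sum_distrib_left algebra_simps)

lemma cinner_n_scale: "cinner_n n (\<lambda>k. a * u k) (\<lambda>k. b * v k) = cnj a * b * cinner_n n u v"
  by (simp add: cinner_n_scale_left cinner_n_scale_right)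

lemma cinner_n_diff_left: "cinner_n n (\<lambda>k. x k - y k) v = cinner_n n x v - cinner_n n y v"
  by (simp add: cinner_n_def algebra_simps sum_subtractf)

lemma cinner_n_diff_right: "cinner_n n v (\<lambda>k. x k - y k) = cinner_n n v x - cinner_n n v y"
  by (simp add: cinner_n_def algebra_simps sum_subtractf)

lemma cinner_n_commute: "cinner_n n v u = cnj (cinner_n n u v)"
  by (simp add: cinner_n_def mult.commute)

lemma Re_cinner_n_self_nonneg: "0 \<le> Re (cinner_n n x x)"
  by (simp add: cinner_n_def sum_nonneg)

lemma cinner_n_of_real:
  "cinner_n n (\<lambda>k. of_real (f k)) (\<lambda>k. of_real (g k)) = of_real (rinner_n n f g)"
  by (simp add: cinner_n_def rinner_n_def)

lemma cinner_n_unit_Cauchy_Schwarz: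
  assumes "cinner_n n u u = 1" "cinner_n n v v = 1"
  shows "(cmod (cinner_n n u v))\<^sup>2 \<le> 1"
proof -
  define c where "c = cinner_n n u v"
  define x where "x = (\<lambda>k. v k - c * u k)"
  have "cinner_n n x x = cinner_n n v v - c * cinner_n n v u - cnj c * cinner_n n u v
      + cnj c * c * cinner_n n u u"
    unfolding x_def cinner_n_diff_left cinner_n_diff_right cinner_n_scale
      cinner_n_scale_left cinner_n_scale_right
    by (simp add: algebra_simps)
  also have "\<dots> = 1 - cnj c * c"
    using assms by (simp add: cinner_n_commute[of n v u] c_def)
  also have "cnj c * c = of_real ((cmod c)\<^sup>2)"
    using complex_norm_square[of c] by (simp add: mult.commute)
  finally have "Re (cinner_n n x x) = 1 - (cmod c)\<^sup>2"
    by simp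
  with Re_cinner_n_self_nonneg[of n x] show ?thesis
    unfolding c_def by simp
qed

definition realify :: "nat \<Rightarrow> (nat \<Rightarrow> complex) \<Rightarrow> nat \<Rightarrow> real" where
  "realify d u k = (if k < d then Re (u k) else Im (u (k - d)))"

lemma rinner_n_realify: "rinner_n (d + d) (realify d u) (realify d v) = Re (cinner_n d u v)"
  unfolding rinner_n_def cinner_n_def realify_def sum_lessThan_add
  by (simp add: sum.distrib)

lemma c_orth_rep_phase_aligned:
  assumes "c_orth_rep d V E psi v"
  obtains v' where "c_orth_rep d V E psi v'"
    and "\<And>j. cinner_n d psi (v' j) = of_real (cmod (cinner_n d psi (v j)))"
proof -
  define c where "c j = cinner_n d psi (v j)" for j
  define \<alpha> where "\<alpha> j = (if c j = 0 then 1 else cnj (c j) / of_real (cmod (c j)))" for j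
  have "cmod (\<alpha> j) = 1" for j
    by (simp add: \<alpha>_def norm_divide)
  then have "cnj (\<alpha> j) * \<alpha> j = 1" for j
    using complex_norm_square[of "\<alpha> j"] by (simp add: mult.commute)
  then have "c_orth_rep d V E psi (\<lambda>j k. \<alpha> j * v j k)"
    using assms by (simp add: c_orth_rep_def cinner_n_scale)
  moreover have "cinner_n d psi (\<lambda>k. \<alpha> j * v j k) = of_real (cmod (c j))" for j
  proof (cases "c j = 0")
    case False
    have "cinner_n d psi (\<lambda>k. \<alpha> j * v j k) = cnj (c j) * c j / of_real (cmod (c j))"
      using False unfolding cinner_n_scale_right c_def[symmetric] by (simp add: \<alpha>_def)
    also have "cnj (c j) * c j = of_real (cmod (c j)) * of_real (cmod (c j))"
      using complex_norm_square[of "c j"] by (simp add: mult.commute power2_eq_square)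
    finally show ?thesis
      using False by simp
  qed (simp add: cinner_n_scale_right c_def[symmetric])
  ultimately show ?thesis
    using that unfolding c_def by blast
qed

lemma c_orth_rep_dim_pos: "c_orth_rep d V E psi v \<Longrightarrow> 0 < d"
  by (rule ccontr) (simp add: c_orth_rep_def cinner_n_def)

theorem c_orth_rep_realify:
  assumes "c_orth_rep d V E psi v"
  shows "\<exists>phi omega. r_orth_rep (2 * d - 1) V E phi omega
           \<and> r_value (2 * d - 1) V w phi omega = c_value d V w psi v"
proof -
  obtain v' where rep': "c_orth_rep d V E psi v'"
    and aligned: "\<And>j. cinner_n d psi (v' j) = of_real (cmod (cinner_n d psi (v j)))"
    using c_orth_rep_phase_aligned[OF assms] by blast
  define M where "M = 2 * d - 1"
  have dd: "d + d = Suc M"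
    using c_orth_rep_dim_pos[OF assms] by (simp add: M_def)
  note realify_inner = rinner_n_realify[of d, unfolded dd]
  define U where "U = realify d (\<lambda>k. \<i> * psi k)"
  from rep' have psi: "cinner_n d psi psi = 1"
    by (simp add: c_orth_rep_def)
  have "rinner_n (Suc M) U U = 1"
    unfolding U_def realify_inner cinner_n_scale psi by simp
  then obtain G where G: "\<And>x y. rinner_n (Suc M) U x = 0 \<Longrightarrow> rinner_n (Suc M) U y = 0 \<Longrightarrow>
      rinner_n M (G x) (G y) = rinner_n (Suc M) x y"
    using isometry_of_orthogonal_complement by blast
  have U_psi: "rinner_n (Suc M) U (realify d psi) = 0"
    unfolding U_def realify_inner cinner_n_scale_left psi by simp
  have U_v: "rinner_n (Suc M) U (realify d (v' j)) = 0" for j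
    unfolding U_def realify_inner cinner_n_scale_left aligned by simp
  note G_realify = G[OF U_psi U_v] G[OF U_v U_v] G[OF U_psi U_psi]
  define phi where "phi = G (realify d psi)"
  define omega where "omega j = G (realify d (v' j))" for j
  have "r_orth_rep M V E phi omega"
    using rep' unfolding r_orth_rep_def c_orth_rep_def phi_def omega_def
    by (simp add: G_realify realify_inner)
  moreover have "r_value M V w phi omega = c_value d V w psi v"
    unfolding r_value_def c_value_def phi_def omega_def
    by (simp add: G_realify realify_inner aligned)
  ultimately show ?thesis
    unfolding M_def by blast
qed

lemma c_orth_rep_of_real:
  "c_orth_rep n V E (\<lambda>k. of_real (psi k)) (\<lambda>j k. of_real (v j k)) \<longleftrightarrow> r_orth_rep n V E psi v"
  by (simp add: c_orth_rep_def r_orth_rep_def cinner_n_of_real)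

lemma c_value_of_real:
  "c_value n V w (\<lambda>k. of_real (psi k)) (\<lambda>j k. of_real (v j k)) = r_value n V w psi v"
  by (simp add: c_value_def r_value_def cinner_n_of_real)

lemma c_value_le_sum_weights:
  assumes "exclusivity_graph V E w" "c_orth_rep n V E psi v"
  shows "c_value n V w psi v \<le> (\<Sum>j\<in>V. w j)"
  unfolding c_value_def
proof (rule sum_mono)
  fix j assume "j \<in> V"
  with assms have "(cmod (cinner_n n psi (v j)))\<^sup>2 \<le> 1" and "0 \<le> w j"
    by (auto simp: c_orth_rep_def exclusivity_graph_def intro: cinner_n_unit_Cauchy_Schwarz)
  then show "w j * (cmod (cinner_n n psi (v j)))\<^sup>2 \<le> w j"
    by (simp add: mult_left_le)
qed

lemma r_value_le_lovasz_theta_c: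
  assumes "exclusivity_graph V E w" "r_orth_rep n V E psi v"
  shows "r_value n V w psi v \<le> lovasz_theta_c V E w"
  unfolding lovasz_theta_c_def
proof (rule cSup_upper)
  show "r_value n V w psi v \<in> {c_value n V w psi v | n psi v. c_orth_rep n V E psi v}"
    using assms(2) by (auto simp flip: c_value_of_real c_orth_rep_of_real)
  show "bdd_above {c_value n V w psi v | n psi v. c_orth_rep n V E psi v}"
    using c_value_le_sum_weights[OF assms(1)] by (auto intro!: bdd_aboveI[where M = "sum w V"])
qed

theorem mainTheorem1:
  fixes V :: "'a set" and E :: "'a \<Rightarrow> 'a \<Rightarrow> bool" and w :: "'a \<Rightarrow> real"
    and d :: nat and psi :: "nat \<Rightarrow> complex" and v :: "'a \<Rightarrow> nat \<Rightarrow> complex"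
  assumes "exclusivity_graph V E w"
    and "c_orth_rep d V E psi v"
    and "c_value d V w psi v = lovasz_theta_c V E w"
  shows "(\<exists>phi omega. r_orth_rep (2 * d - 1) V E phi omega
            \<and> r_value (2 * d - 1) V w phi omega = lovasz_theta_c V E w)
         \<and> lovasz_theta_c V E w = lovasz_theta V E w"
proof
  show real_rep: "\<exists>phi omega. r_orth_rep (2 * d - 1) V E phi omega
      \<and> r_value (2 * d - 1) V w phi omega = lovasz_theta_c V E w"
    using c_orth_rep_realify[OF assms(2), where w = w] assms(3) by simp
  have "lovasz_theta V E w = lovasz_theta_c V E w"
    unfolding lovasz_theta_def
  proof (rule cSup_eq_maximum)
    show "lovasz_theta_c V E w \<in> {r_value n V w psi v | n psi v. r_orth_rep n V E psi v}"
      using real_rep unfolding mem_Collect_eq by metis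
    show "\<And>x. x \<in> {r_value n V w psi v | n psi v. r_orth_rep n V E psi v} \<Longrightarrow>
        x \<le> lovasz_theta_c V E w"
      using r_value_le_lovasz_theta_c[OF assms(1)] by blast
  qed
  then show "lovasz_theta_c V E w = lovasz_theta V E w"
    by simp
qed

end
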